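(* For every $n>0$, there are finite alphabets $\Sigma_I,\Sigma_O$ and a language $L_n''\subseteq(\Sigma_I\times\Sigma_O)^\omega$ recognized by a finitary Büchi automaton with costs $\mathcal{A}_n''$ with $O(n^2)$ states such that for every $j\in\{0,1,\ldots,n\}$, an optimal winning strategy for Player $O$ in $\Gamma_{f_j}(L_n'')$ exists and has cost $2(n+1)-j$.
   Context: A parity automaton with costs is a tuple $\mathcal{A}=(Q,\Sigma,q_I,\delta,\Omega,\mathrm{Cst})$ with a finite set $Q$ of states, a finite alphabet $\Sigma$, an initial state $q_I$, a deterministic complete transition function $\delta\colon Q\times\Sigma\to Q$, a coloring $\Omega\colon Q\to\mathbb{N}$, and a cost function $\mathrm{Cst}$ assigning to every transition $(q,a,\delta(q,a))$ either $\epsilon$ or $\mathtt{i}$ (increment-transition). A finitary Büchi automaton is one in which every transition is an increment-transition and $\Omega(Q)=\{1,2\}$. The run on $a_0a_1\cdots$ is $(q_0,a_0,q_1)(q_1,a_1,q_2)\cdots$ with $q_0=q_I$, $q_{j+1}=\delta(q_j,a_j)$; the cost of a finite run is its number of increment-transitions. For odd $c$, $\mathrm{Ans}(c)=\{c'\in\Omega(Q)\mid c'>c,\ c'\text{ even}\}$. For an infinite run $\rho$ and $n$, $\mathrm{Cor}(\rho,n)=0$ if $\Omega(q_n)$ is even, and otherwise it is the minimal cost of $(q_n,a_n,q_{n+1})\cdots(q_{n'-1},a_{n'-1},q_{n'})$ over $n'>n$ with $\Omega(q_{n'})\in\mathrm{Ans}(\Omega(q_n))$ ($\min\emptyset=\infty$).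 The run is accepting if $\limsup_n\mathrm{Cor}(\rho,n)<\infty$; $L(\mathcal{A})$ is the set of infinite words whose run is accepting. A delay function is a map $f\colon\mathbb{N}\to\mathbb{N}\setminus\{0\}$; for $k\ge0$, $f_k$ denotes the delay function with $f_k(0)=k+1$ and $f_k(i)=1$ for $i>0$. For $L\subseteq(\Sigma_I\times\Sigma_O)^\omega$, the delay game $\Gamma_f(L)$ is played in rounds $i=0,1,2,\ldots$: in round $i$, Player $I$ picks $u_i\in\Sigma_I^{f(i)}$, then Player $O$ picks $v_i\in\Sigma_O$. Player $O$ wins the play if the outcome, i.e., the word over $\Sigma_I\times\Sigma_O$ pairing $u_0u_1u_2\cdots$ and $v_0v_1v_2\cdots$ letterwise, is in $L$. A strategy for Player $O$ is a map $\tau_O\colon\Sigma_I^*\to\Sigma_O$; a play is consistent with $\tau_O$ if $v_i=\tau_O(u_0\cdots u_i)$ for all $i$; $\tau_O$ is winning if every consistent play is won by Player $O$. For a winning strategy $\tau_O$ in $\Gamma_f(L(\mathcal{A}))$, its cost is $\mathrm{Cst}_\mathcal{A}(\tau_O)=\sup_w\limsup_{n\to\infty}\mathrm{Cor}(\rho(w),n)$, where $w$ ranges over outcomes of plays consistent with $\tau_O$ and $\rho(w)$ is the run of $\mathcal{A}$ on $w$; a winning strategy is optimal if its cost is minimal among all winning strategies of Player $O$ in $\Gamma_f(L(\mathcal{A}))$. *)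

theory Defs
  imports Main "HOL-Library.Extended_Nat" "HOL-Library.Liminf_Limsup"
begin

text \<open>The alphabet is stored explicitly; the
transition function is deterministic and complete on states x alphabet.
incr A q a holds iff the transition (q, a, delta q a) is an increment-transition
(otherwise its cost is epsilon).\<close>

record ('q, 'a) pac =
  states :: "'q set"
  alph   :: "'a set"
  init   :: 'q
  delta  :: "'q \<Rightarrow> 'a \<Rightarrow> 'q"
  color  :: "'q \<Rightarrow> nat"
  incr   :: "'q \<Rightarrow> 'a \<Rightarrow> bool"

definition pac_wf :: "('q, 'a) pac \<Rightarrow> bool" where
  "pac_wf A \<longleftrightarrow> finite (states A) \<and> finite (alph A) \<and> init A \<in> states A \<and>
     (\<forall>q\<in>states A. \<forall>a\<in>alph A. delta A q a \<in> states A)"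

definition finitary_buchi :: "('q, 'a) pac \<Rightarrow> bool" where
  "finitary_buchi A \<longleftrightarrow> pac_wf A \<and>
     (\<forall>q\<in>states A. \<forall>a\<in>alph A. incr A q a) \<and> color A ` states A = {1, 2}"

definition omega_words :: "'a set \<Rightarrow> (nat \<Rightarrow> 'a) set" where
  "omega_words S = {w. \<forall>i. w i \<in> S}"

primrec run :: "('q, 'a) pac \<Rightarrow> (nat \<Rightarrow> 'a) \<Rightarrow> nat \<Rightarrow> 'q" where
  "run A w 0 = init A"
| "run A w (Suc n) = delta A (run A w n) (w n)"

definition seg_cost :: "('q, 'a) pac \<Rightarrow> (nat \<Rightarrow> 'a) \<Rightarrow> nat \<Rightarrow> nat \<Rightarrow> nat" where
  "seg_cost A w n n' = card {k. n \<le> k \<and> k < n' \<and> incr A (run A w k) (w k)}"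

definition Ans :: "('q, 'a) pac \<Rightarrow> nat \<Rightarrow> nat set" where
  "Ans A c = {c' \<in> color A ` states A. c < c' \<and> even c'}"

definition Cor :: "('q, 'a) pac \<Rightarrow> (nat \<Rightarrow> 'a) \<Rightarrow> nat \<Rightarrow> enat" where
  "Cor A w n = (if even (color A (run A w n)) then 0
     else (INF n' \<in> {n'. n < n' \<and> color A (run A w n') \<in> Ans A (color A (run A w n))}.
             enat (seg_cost A w n n')))"

definition accepting :: "('q, 'a) pac \<Rightarrow> (nat \<Rightarrow> 'a) \<Rightarrow> bool" where
  "accepting A w \<longleftrightarrow> limsup (Cor A w) < \<infinity>"

definition lang :: "('q, 'a) pac \<Rightarrow> (nat \<Rightarrow> 'a) set" where
  "lang A = {w \<in> omega_words (alph A). accepting A w}"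

definition delay_fun :: "(nat \<Rightarrow> nat) \<Rightarrow> bool" where
  "delay_fun f \<longleftrightarrow> (\<forall>i. f i > 0)"

definition fk :: "nat \<Rightarrow> nat \<Rightarrow> nat" where
  "fk k i = (if i = 0 then k + 1 else 1)"

text \<open>Number of input letters chosen by Player I up to and including round i.\<close>
definition prefix_len :: "(nat \<Rightarrow> nat) \<Rightarrow> nat \<Rightarrow> nat" where
  "prefix_len f i = (\<Sum>l\<le>i. f l)"

text \<open>Outcome of the play in which Player I's letters u_0 u_1 ... concatenate to alpha
and Player O plays consistently with tau: v_i = tau (u_0 ... u_i).\<close>
definition outcome :: "(nat \<Rightarrow> nat) \<Rightarrow> ('i list \<Rightarrow> 'o) \<Rightarrow> (nat \<Rightarrow> 'i) \<Rightarrow> nat \<Rightarrow> 'i \<times> 'o" where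
  "outcome f tau alpha = (\<lambda>i. (alpha i, tau (map alpha [0..<prefix_len f i])))"

definition strategy :: "'i set \<Rightarrow> 'o set \<Rightarrow> ('i list \<Rightarrow> 'o) \<Rightarrow> bool" where
  "strategy SI SO tau \<longleftrightarrow> (\<forall>x. tau x \<in> SO)"

definition winning :: "(nat \<Rightarrow> nat) \<Rightarrow> 'i set \<Rightarrow> 'o set \<Rightarrow> (nat \<Rightarrow> 'i \<times> 'o) set
    \<Rightarrow> ('i list \<Rightarrow> 'o) \<Rightarrow> bool" where
  "winning f SI SO L tau \<longleftrightarrow> strategy SI SO tau \<and>
     (\<forall>alpha \<in> omega_words SI. outcome f tau alpha \<in> L)"

definition strat_cost :: "('q, 'i \<times> 'o) pac \<Rightarrow> (nat \<Rightarrow> nat) \<Rightarrow> 'i set \<Rightarrow> ('i list \<Rightarrow> 'o) \<Rightarrow> enat" where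
  "strat_cost A f SI tau = (SUP alpha \<in> omega_words SI. limsup (Cor A (outcome f tau alpha)))"

definition optimal :: "('q, 'i \<times> 'o) pac \<Rightarrow> (nat \<Rightarrow> nat) \<Rightarrow> 'i set \<Rightarrow> 'o set \<Rightarrow> ('i list \<Rightarrow> 'o) \<Rightarrow> bool" where
  "optimal A f SI SO tau \<longleftrightarrow> winning f SI SO (lang A) tau \<and>
     (\<forall>tau'. winning f SI SO (lang A) tau' \<longrightarrow> strat_cost A f SI tau \<le> strat_cost A f SI tau')"

end

theory Submission
  imports Defs
begin

text \<open>The automaton cuts the play into blocks of \<open>2n + 4\<close> letters and requires Player O to announce,
  in every block, the input letter at position \<open>2n + 2\<close> before it is read there; only the start of
  a block, the announcement and its confirmation are even. With lookahead \<open>j\<close> Player O can announce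
  that letter \<open>j\<close> steps early, so even positions are at most \<open>2n + 2 - j\<close> apart. Any earlier
  announcement is made before the letter is visible and Player I refutes it by choosing the other
  letter, which leads into a rejecting sink. Hence against the all-zero input a winning strategy
  must leave positions \<open>1, \<dots>, 2n + 2 - j\<close> of every block odd, so its cost is at least \<open>2n + 2 - j\<close>.\<close>

lemma le_Limsup_frequently:
  fixes X :: "'b \<Rightarrow> 'a::complete_linorder"
  assumes "\<exists>\<^sub>F x in F. C \<le> X x"
  shows "C \<le> Limsup F X"
proof (rule ccontr)
  assume "\<not> C \<le> Limsup F X"
  then have "\<forall>\<^sub>F x in F. X x < C" by (intro Limsup_lessD) (simp add: not_le)
  with assms show False by (simp add: frequently_def eventually_mono not_le)
qed

lemma mod_add_offset: "t mod p = r \<Longrightarrow> r + e < p \<Longrightarrow> (t + e) mod p = r + (e::nat)"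
  by (metis mod_add_left_eq mod_less)

lemma run_in_states:
  assumes "pac_wf A" "w \<in> omega_words (alph A)"
  shows "run A w t \<in> states A"
  using assms by (induction t) (auto simp: pac_wf_def omega_words_def)

lemma run_cong: "(\<And>i. i < t \<Longrightarrow> w i = w' i) \<Longrightarrow> run A w t = run A w' t"
  by (induction t) auto

context
  fixes A :: "('q, 'a) pac" and w :: "nat \<Rightarrow> 'a"
  assumes buchi: "finitary_buchi A" and word: "w \<in> omega_words (alph A)"
begin

lemma color_run_finitary_buchi: "color A (run A w t) \<in> {1, 2}"
  using buchi run_in_states[OF _ word] unfolding finitary_buchi_def by blast

lemma seg_cost_finitary_buchi: "seg_cost A w t t' = t' - t"
proof -
  have "incr A (run A w k) (w k)" for k
    using buchi run_in_states[OF _ word] word unfolding finitary_buchi_def omega_words_def by blast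
  then have "{k. t \<le> k \<and> k < t' \<and> incr A (run A w k) (w k)} = {t..<t'}" by auto
  then show ?thesis unfolding seg_cost_def by simp
qed

lemma Cor_finitary_buchi:
  "Cor A w t = (if color A (run A w t) = 2 then 0
     else INF t' \<in> {t'. t < t' \<and> color A (run A w t') = 2}. enat (t' - t))"
proof (cases "color A (run A w t) = 2")
  case False
  have "color A ` states A = {1, 2}"
    using buchi by (simp add: finitary_buchi_def)
  then have "Ans A 1 = {2}"
    unfolding Ans_def by force
  moreover have "color A (run A w t) = 1"
    using False color_run_finitary_buchi[of t] by simp
  ultimately show ?thesis
    unfolding Cor_def seg_cost_finitary_buchi by simp
qed (simp add: Cor_def)

lemma Cor_le_distance_to_even:
  assumes "color A (run A w (t + d)) = 2" "0 < d"
  shows "Cor A w t \<le> enat d"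
  using assms unfolding Cor_finitary_buchi by (auto intro!: INF_lower2[where i="t + d"])

lemma distance_to_even_le_Cor:
  assumes "\<And>e. e < d \<Longrightarrow> color A (run A w (t + e)) \<noteq> 2"
  shows "enat d \<le> Cor A w t"
proof (cases "d = 0")
  case False
  have "enat d \<le> enat (t' - t)" if "t < t'" "color A (run A w t') = 2" for t'
    using assms[of "t' - t"] that by force
  then show ?thesis
    using assms[of 0] False unfolding Cor_finitary_buchi by (auto intro: INF_greatest)
qed (simp add: zero_enat_def [symmetric])

lemma not_accepting_if_eventually_odd:
  assumes "\<And>t'. t \<le> t' \<Longrightarrow> color A (run A w t') \<noteq> 2"
  shows "\<not> accepting A w"
proof -
  have "Cor A w t' = \<infinity>" if "t \<le> t'" for t'
  proof (rule ccontr)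
    assume "Cor A w t' \<noteq> \<infinity>"
    then obtain k where "Cor A w t' = enat k" by auto
    moreover have "enat (Suc k) \<le> Cor A w t'"
      using that by (intro distance_to_even_le_Cor assms) simp
    ultimately show False by simp
  qed
  then have "\<infinity> \<le> limsup (Cor A w)"
    by (intro le_Limsup) (auto simp: eventually_sequentially)
  then show ?thesis unfolding accepting_def by (simp add: top.extremum_unique)
qed

end

lemma prefix_len_fk: "prefix_len (fk j) i = i + j + 1"
  unfolding prefix_len_def by (induction i) (auto simp: fk_def)

lemma outcome_fk: "outcome (fk j) tau alpha i = (alpha i, tau (map alpha [0..<i + j + 1]))"
  by (simp add: outcome_def prefix_len_fk del: upt_Suc)

lemma outcome_fk_cong:
  assumes "\<And>m. m \<le> i + j \<Longrightarrow> alpha m = alpha' m"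
  shows "outcome (fk j) tau alpha i = outcome (fk j) tau alpha' i"
proof -
  have "map alpha [0..<i + j + 1] = map alpha' [0..<i + j + 1]"
    using assms by (intro map_cong) auto
  moreover have "alpha i = alpha' i" using assms by simp
  ultimately show ?thesis unfolding outcome_fk by (simp only:)
qed

lemma outcome_in_omega_words:
  "strategy SI SO tau \<Longrightarrow> alpha \<in> omega_words SI \<Longrightarrow> outcome f tau alpha \<in> omega_words (SI \<times> SO)"
  by (simp add: strategy_def omega_words_def outcome_def)

lemma omega_words_bits_le_1:
  assumes "alpha \<in> omega_words {0, 1}"
  shows "alpha i \<le> (1::nat)"
proof -
  have "alpha i \<in> {0, 1}" using assms unfolding omega_words_def by blast
  then show ?thesis by auto
qed

definition deadline :: "nat \<Rightarrow> nat" where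
  "deadline n = 2 * n + 2"

definition period :: "nat \<Rightarrow> nat" where
  "period n = deadline n + 2"

lemma mod_period_Suc:
  "Suc t mod period n = (if t mod period n = deadline n + 1 then 0 else Suc (t mod period n))"
  using mod_Suc[of t "period n"] by (simp add: period_def)

lemma mod_period_le: "t mod period n \<le> deadline n + 1"
  using mod_less_divisor[of "period n" t] by (simp add: period_def)

text \<open>The automaton reads the word in blocks of \<open>period n\<close> letters. Its state \<open>8 * r + s\<close> records
  the position \<open>r\<close> inside the current block and a phase \<open>s\<close>: \<open>0\<close> while Player O has not yet
  announced the input letter at position \<open>deadline n\<close> of the block; \<open>1 + b\<close> and \<open>3 + b\<close> after she
  announced \<open>b\<close> (\<open>1 + b\<close> only right after the announcement); \<open>5\<close> after the announcement was
  confirmed; \<open>6\<close> is a rejecting sink. The even states are the start of the first block, a fresh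
  announcement and a confirmation.\<close>

definition phase_step :: "nat \<Rightarrow> nat \<Rightarrow> nat \<Rightarrow> nat \<Rightarrow> nat \<Rightarrow> nat" where
  "phase_step n r s u v =
    (if s = 6 then 6
     else if r = deadline n + 1 then 0
     else if r = deadline n then
       (if s = 0 \<and> v = u \<or> (s = Suc u \<or> s = 3 + u) \<and> u \<le> 1 then 5 else 6)
     else if s = 0 then (if v \<le> 1 then Suc v else 0)
     else if s \<le> 4 then 3 + (s - 1) mod 2
     else 6)"

lemma phase_step_le: "phase_step n r s u v \<le> 6"
  using mod_less_divisor[of 2 "s - 1"] unfolding phase_step_def by auto

lemma phase_step_mod_div_8 [simp]:
  "phase_step n r s u v mod 8 = phase_step n r s u v" "phase_step n r s u v div 8 = 0"
  using phase_step_le[of n r s u v] by simp_all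

lemma phase_step_sink [simp]: "phase_step n r 6 u v = 6"
  by (simp add: phase_step_def)

lemma phase_step_reset: "s \<noteq> 6 \<Longrightarrow> phase_step n (Suc (deadline n)) s u v = 0"
  by (simp add: phase_step_def)

lemma phase_step_wait: "r < deadline n \<Longrightarrow> 1 < v \<Longrightarrow> phase_step n r 0 u v = 0"
  by (simp add: phase_step_def)

lemma phase_step_guess: "r < deadline n \<Longrightarrow> v \<le> 1 \<Longrightarrow> phase_step n r 0 u v = Suc v"
  by (simp add: phase_step_def)

lemma phase_step_keep_guess:
  "r < deadline n \<Longrightarrow> s \<in> {Suc b, 3 + b} \<Longrightarrow> b \<le> 1 \<Longrightarrow> phase_step n r s u v = 3 + b"
  by (auto simp: phase_step_def)

lemma phase_step_check_guess:
  "s \<in> {Suc b, 3 + b} \<Longrightarrow> b \<le> 1 \<Longrightarrow> phase_step n (deadline n) s u v = (if u = b then 5 else 6)"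
  by (auto simp: phase_step_def)

definition guess_aut :: "nat \<Rightarrow> (nat, nat \<times> nat) pac" where
  "guess_aut n =
    \<lparr>states = {q. q div 8 < period n \<and> q mod 8 \<le> 6},
     alph = {0, 1} \<times> {0, 1, 2},
     init = 0,
     delta = \<lambda>q a. 8 * ((q div 8 + 1) mod period n)
                   + phase_step n (q div 8) (q mod 8) (fst a) (snd a),
     color = \<lambda>q. if q = 0 \<or> q mod 8 \<in> {1, 2, 5} then 2 else 1,
     incr = \<lambda>_ _. True\<rparr>"

lemma guess_aut_simps [simp]:
  "states (guess_aut n) = {q. q div 8 < period n \<and> q mod 8 \<le> 6}"
  "alph (guess_aut n) = {0, 1} \<times> {0, 1, 2}"
  "init (guess_aut n) = 0"
  "delta (guess_aut n) q a =
     8 * ((q div 8 + 1) mod period n) + phase_step n (q div 8) (q mod 8) (fst a) (snd a)"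
  "incr (guess_aut n) q a"
  by (simp_all add: guess_aut_def)

lemma color_guess_aut: "color (guess_aut n) q = (if q = 0 \<or> q mod 8 \<in> {1, 2, 5} then 2 else 1)"
  by (simp add: guess_aut_def)

definition phase :: "nat \<Rightarrow> (nat \<Rightarrow> nat \<times> nat) \<Rightarrow> nat \<Rightarrow> nat" where
  "phase n w t = run (guess_aut n) w t mod 8"

lemma run_guess_aut_div_mod:
  "run (guess_aut n) w t div 8 = t mod period n \<and> run (guess_aut n) w t mod 8 \<le> 6"
proof (induction t)
  case (Suc t)
  then show ?case using phase_step_le by (simp add: mod_Suc_eq)
qed simp

lemma run_guess_aut: "run (guess_aut n) w t = 8 * (t mod period n) + phase n w t"
  using run_guess_aut_div_mod[of n w t] unfolding phase_def by (metis div_mult_mod_eq mult.commute)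

lemma phase_le: "phase n w t \<le> 6"
  using run_guess_aut_div_mod[of n w t] unfolding phase_def by blast

lemma phase_0 [simp]: "phase n w 0 = 0"
  by (simp add: phase_def)

lemma phase_Suc:
  "phase n w (Suc t) = phase_step n (t mod period n) (phase n w t) (fst (w t)) (snd (w t))"
  using run_guess_aut_div_mod[of n w t] by (simp add: phase_def)

lemma even_run_guess_aut:
  "color (guess_aut n) (run (guess_aut n) w t) = 2 \<longleftrightarrow>
     t mod period n = 0 \<and> phase n w t = 0 \<or> phase n w t \<in> {1, 2, 5}"
  using phase_le[of n w t] unfolding run_guess_aut color_guess_aut by auto

lemma finitary_buchi_guess_aut: "finitary_buchi (guess_aut n)"
proof -
  have "states (guess_aut n) \<subseteq> {..<8 * period n}" by auto
  then have "finite (states (guess_aut n))" by (rule finite_subset) simp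
  moreover have "delta (guess_aut n) q a \<in> states (guess_aut n)" if "q \<in> states (guess_aut n)" for q a
    using phase_step_le[of n "q div 8" "q mod 8" "fst a" "snd a"] by (simp add: period_def)
  moreover have "color (guess_aut n) ` states (guess_aut n) = {1, 2}"
  proof
    show "color (guess_aut n) ` states (guess_aut n) \<subseteq> {1, 2}" by (auto simp: color_guess_aut)
    have "0 \<in> states (guess_aut n)" "8 \<in> states (guess_aut n)" by (simp_all add: period_def)
    moreover have "color (guess_aut n) 8 = 1" "color (guess_aut n) 0 = 2"
      by (simp_all add: color_guess_aut)
    ultimately show "{1, 2} \<subseteq> color (guess_aut n) ` states (guess_aut n)"
      by (metis empty_subsetI image_eqI insert_subset)
  qed
  ultimately show ?thesis
    unfolding finitary_buchi_def pac_wf_def by (auto simp: period_def)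
qed

lemma card_states_guess_aut: "card (states (guess_aut n)) \<le> 8 * period n"
proof -
  have "states (guess_aut n) \<subseteq> {..<8 * period n}" by auto
  then show ?thesis using card_mono[of "{..<8 * period n}"] by simp
qed

lemma phase_sink_absorbing: "phase n w t = 6 \<Longrightarrow> phase n w (t + e) = 6"
  by (induction e) (simp_all add: phase_Suc)

lemma sink_not_accepting:
  assumes "w \<in> omega_words (alph (guess_aut n))" "phase n w t = 6"
  shows "\<not> accepting (guess_aut n) w"
proof (rule not_accepting_if_eventually_odd[OF finitary_buchi_guess_aut assms(1)])
  fix t' assume "t \<le> t'"
  then have "phase n w t' = 6"
    using phase_sink_absorbing[OF assms(2), of "t' - t"] by simp
  then show "color (guess_aut n) (run (guess_aut n) w t') \<noteq> 2"
    unfolding even_run_guess_aut by simp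
qed

lemma outcome_in_alph_guess_aut:
  "strategy {0, 1} {0, 1, 2} tau \<Longrightarrow> alpha \<in> omega_words {0, 1} \<Longrightarrow>
     outcome f tau alpha \<in> omega_words (alph (guess_aut n))"
  unfolding guess_aut_simps by (rule outcome_in_omega_words)

abbreviation wins :: "nat \<Rightarrow> nat \<Rightarrow> (nat list \<Rightarrow> nat) \<Rightarrow> bool" where
  "wins n j tau \<equiv> winning (fk j) {0, 1} {0, 1, 2} (lang (guess_aut n)) tau"

lemma wins_never_sink:
  assumes "wins n j tau" "alpha \<in> omega_words {0, 1}"
  shows "phase n (outcome (fk j) tau alpha) t \<noteq> 6"
  using assms sink_not_accepting unfolding winning_def lang_def by blast

lemma phase_keeps_guess:
  assumes "phase n w t \<in> {Suc b, 3 + b}" "b \<le> 1" "t mod period n + d \<le> deadline n"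
  shows "phase n w (t + d) \<in> {Suc b, 3 + b}"
  using assms(3)
proof (induction d)
  case (Suc d)
  have "(t + d) mod period n = t mod period n + d"
    using Suc.prems by (intro mod_add_offset) (simp_all add: period_def)
  with Suc show ?case
    using assms(2) by (simp add: phase_Suc phase_step_keep_guess)
qed (use assms(1) in simp)

text \<open>A guess made before the deadline letter is visible to Player O is refuted by changing
  only that letter.\<close>

lemma premature_guess_refuted:
  assumes W: "wins n j tau" and alpha: "alpha \<in> omega_words {0, 1}"
    and waiting: "phase n (outcome (fk j) tau alpha) t = 0"
    and early: "t mod period n + j < deadline n"
  shows "1 < snd (outcome (fk j) tau alpha t)"
proof (rule ccontr)
  define r where "r = t mod period n"
  define v where "v = snd (outcome (fk j) tau alpha t)"
  define tD where "tD = t + (deadline n - r)"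
  define alpha' where "alpha' = alpha(tD := 1 - v)"
  define w' where "w' = outcome (fk j) tau alpha'"
  assume "\<not> 1 < snd (outcome (fk j) tau alpha t)"
  then have v: "v \<le> 1" unfolding v_def by simp
  have alpha': "alpha' \<in> omega_words {0, 1}"
    using alpha unfolding alpha'_def omega_words_def by auto
  have same: "w' i = outcome (fk j) tau alpha i" if "i \<le> t" for i
  proof -
    have "m \<noteq> tD" if "m \<le> i + j" for m
      using that \<open>i \<le> t\<close> early unfolding tD_def r_def by linarith
    then show ?thesis
      unfolding w'_def alpha'_def by (intro outcome_fk_cong) simp
  qed
  then have "phase n w' t = 0"
    using waiting unfolding phase_def by (metis run_cong less_imp_le_nat)
  then have "phase n w' (Suc t) = Suc v"
    using early same[of t] v by (simp add: phase_Suc phase_step_guess r_def v_def)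
  moreover have "Suc t mod period n = Suc r"
    using early by (simp add: mod_period_Suc r_def)
  moreover have "Suc t + (deadline n - Suc r) = tD"
    using early unfolding tD_def r_def by simp
  ultimately have guessed: "phase n w' tD \<in> {Suc v, 3 + v}"
    using v early phase_keeps_guess[of n w' "Suc t" v "deadline n - Suc r"] by (simp add: r_def)
  have "tD mod period n = r + (deadline n - r)"
    unfolding tD_def using early by (intro mod_add_offset) (simp_all add: r_def period_def)
  then have "tD mod period n = deadline n"
    using early unfolding r_def by simp
  moreover have "fst (w' tD) = 1 - v"
    unfolding w'_def alpha'_def outcome_fk by simp
  moreover have "1 - v \<noteq> v" by arith
  ultimately have "phase n w' (Suc tD) = 6"
    using guessed v by (auto simp only: phase_Suc phase_step_check_guess if_False)
  then show False
    using wins_never_sink[OF W alpha'] unfolding w'_def by blast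
qed

lemma phase_waiting:
  assumes W: "wins n j tau" and alpha: "alpha \<in> omega_words {0, 1}"
  shows "t mod period n + j \<le> deadline n \<Longrightarrow> phase n (outcome (fk j) tau alpha) t = 0"
proof (induction t)
  case (Suc t)
  let ?w = "outcome (fk j) tau alpha"
  show ?case
  proof (cases "t mod period n = deadline n + 1")
    case True
    then show ?thesis
      using wins_never_sink[OF W alpha] by (simp add: phase_Suc phase_step_reset)
  next
    case False
    then have early: "t mod period n + j < deadline n"
      using Suc.prems by (simp add: mod_period_Suc)
    then have "phase n ?w t = 0" using Suc.IH by simp
    moreover have "1 < snd (?w t)"
      using premature_guess_refuted[OF W alpha calculation early] .
    ultimately show ?thesis
      using early by (simp add: phase_Suc phase_step_wait)
  qed
qed simp

lemma strat_cost_lower_bound: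
  assumes W: "wins n j tau"
  shows "enat (deadline n - j) \<le> strat_cost (guess_aut n) (fk j) {0, 1} tau"
proof -
  define alpha :: "nat \<Rightarrow> nat" where "alpha = (\<lambda>_. 0)"
  define w where "w = outcome (fk j) tau alpha"
  have alpha: "alpha \<in> omega_words {0, 1}" unfolding alpha_def omega_words_def by simp
  have w: "w \<in> omega_words (alph (guess_aut n))"
    using W alpha unfolding w_def winning_def by (blast intro: outcome_in_alph_guess_aut)
  have "enat (deadline n - j) \<le> Cor (guess_aut n) w (m * period n + 1)" for m
  proof (rule distance_to_even_le_Cor[OF finitary_buchi_guess_aut w])
    fix e assume "e < deadline n - j"
    moreover have "Suc e < period n"
      using calculation by (simp add: period_def)
    then have "(m * period n + 1 + e) mod period n = Suc e"
      by (metis add.assoc mod_less mod_mult_self3 plus_1_eq_Suc)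
    ultimately show "color (guess_aut n) (run (guess_aut n) w (m * period n + 1 + e)) \<noteq> 2"
      using phase_waiting[OF W alpha, of "m * period n + 1 + e"] unfolding w_def even_run_guess_aut
      by simp
  qed
  moreover have "m \<le> m * period n + 1" for m
  proof -
    have "m * 1 \<le> m * period n" by (rule mult_le_mono2) (simp add: period_def)
    then show ?thesis by linarith
  qed
  ultimately have "\<exists>\<^sub>F m in sequentially. enat (deadline n - j) \<le> Cor (guess_aut n) w m"
    unfolding frequently_sequentially by (meson le_trans le_refl)
  then have "enat (deadline n - j) \<le> limsup (Cor (guess_aut n) w)"
    by (rule le_Limsup_frequently)
  also have "\<dots> \<le> strat_cost (guess_aut n) (fk j) {0, 1} tau"
    unfolding strat_cost_def w_def using alpha by (rule SUP_upper)
  finally show ?thesis .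
qed

text \<open>In round \<open>t\<close> Player O has seen the letters up to position \<open>t + j\<close>, so with lookahead
  \<open>j\<close> she can announce the deadline letter exactly \<open>j\<close> positions before the deadline.\<close>

definition predict :: "nat \<Rightarrow> nat \<Rightarrow> nat list \<Rightarrow> nat" where
  "predict n j xs =
     (if (length xs - Suc j) mod period n + j = deadline n then min 1 (last xs) else 2)"

lemma strategy_predict: "strategy {0, 1} {0, 1, 2} (predict n j)"
  by (simp add: strategy_def predict_def min_def)

lemma outcome_predict:
  assumes "alpha \<in> omega_words {0, 1}"
  shows "outcome (fk j) (predict n j) alpha t =
    (alpha t, if t mod period n + j = deadline n then alpha (t + j) else 2)"
proof -
  have "min 1 (alpha (t + j)) = alpha (t + j)"
    using omega_words_bits_le_1[OF assms, of "t + j"] by (simp add: min_def)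
  then show ?thesis
    unfolding outcome_fk predict_def by simp
qed

definition predicted_phase :: "nat \<Rightarrow> nat \<Rightarrow> nat \<Rightarrow> nat \<Rightarrow> nat" where
  "predicted_phase n j r b =
     (if r + j \<le> deadline n then 0
      else if r = deadline n + 1 then 5
      else if r + j = deadline n + 1 then Suc b
      else 3 + b)"

lemma phase_step_predicted_phase:
  assumes "j \<le> deadline n" "b \<le> 1" "r \<le> deadline n" "r = deadline n \<Longrightarrow> u = b"
  shows "phase_step n r (predicted_phase n j r b) u (if r + j = deadline n then b else 2) =
    predicted_phase n j (Suc r) b"
  using assms by (auto simp: phase_step_def predicted_phase_def)

lemma phase_predict:
  assumes j: "j \<le> deadline n" and alpha: "alpha \<in> omega_words {0, 1}"
  shows "phase n (outcome (fk j) (predict n j) alpha) t =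
    predicted_phase n j (t mod period n) (alpha (t - t mod period n + deadline n))"
proof (induction t)
  case 0
  then show ?case using j by (simp add: predicted_phase_def)
next
  case (Suc t)
  define r where "r = t mod period n"
  define b where "b = alpha (t - r + deadline n)"
  have b: "b \<le> 1" unfolding b_def by (rule omega_words_bits_le_1[OF alpha])
  have "r \<le> t" unfolding r_def by simp
  show ?case
  proof (cases "r = deadline n + 1")
    case True
    then show ?thesis
      using Suc.IH j by (simp add: phase_Suc mod_period_Suc phase_step_reset predicted_phase_def r_def)
  next
    case False
    then have r: "r \<le> deadline n" using mod_period_le[of t n] unfolding r_def by simp
    have "Suc t mod period n = Suc r" using False by (simp add: mod_period_Suc r_def)
    moreover have "Suc t - Suc r + deadline n = t - r + deadline n" by simp
    ultimately have predicted_Suc: "predicted_phase n j (Suc t mod period n)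
        (alpha (Suc t - Suc t mod period n + deadline n)) = predicted_phase n j (Suc r) b"
      unfolding b_def by simp
    have "alpha t = b" if "r = deadline n"
      using that \<open>r \<le> t\<close> unfolding b_def by simp
    moreover have "alpha (t + j) = b" if "r + j = deadline n"
    proof -
      have "t + j = t - r + deadline n" using that \<open>r \<le> t\<close> by arith
      then show ?thesis unfolding b_def by simp
    qed
    ultimately have "outcome (fk j) (predict n j) alpha t =
        (alpha t, if r + j = deadline n then b else 2)"
      unfolding outcome_predict[OF alpha] r_def[symmetric] by simp
    moreover have "phase n (outcome (fk j) (predict n j) alpha) t = predicted_phase n j r b"
      using Suc.IH unfolding r_def b_def .
    ultimately show ?thesis
      unfolding predicted_Suc phase_Suc r_def[symmetric]
      using phase_step_predicted_phase[OF j b r, of "alpha t"] \<open>r = deadline n \<Longrightarrow> alpha t = b\<close>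
      by simp
  qed
qed

lemma even_run_predict:
  assumes "j \<le> deadline n" "alpha \<in> omega_words {0, 1}"
  shows "color (guess_aut n) (run (guess_aut n) (outcome (fk j) (predict n j) alpha) t) = 2 \<longleftrightarrow>
    t mod period n \<in> {0, deadline n + 1 - j, deadline n + 1}"
  using assms omega_words_bits_le_1[OF assms(2), of "t - t mod period n + deadline n"]
  unfolding even_run_guess_aut phase_predict[OF assms] predicted_phase_def by auto

lemma Cor_predict_le:
  assumes j: "j \<le> n" and alpha: "alpha \<in> omega_words {0, 1}"
  shows "Cor (guess_aut n) (outcome (fk j) (predict n j) alpha) t \<le> enat (deadline n - j)"
proof -
  define w where "w = outcome (fk j) (predict n j) alpha"
  define r where "r = t mod period n"
  have jD: "j \<le> deadline n" using j by (simp add: deadline_def)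
  have w: "w \<in> omega_words (alph (guess_aut n))"
    unfolding w_def using strategy_predict alpha by (rule outcome_in_alph_guess_aut)
  have even: "color (guess_aut n) (run (guess_aut n) w t') = 2 \<longleftrightarrow>
      t' mod period n \<in> {0, deadline n + 1 - j, deadline n + 1}" for t'
    unfolding w_def using jD alpha by (rule even_run_predict)
  show ?thesis
  proof (cases "color (guess_aut n) (run (guess_aut n) w t) = 2")
    case True
    then show ?thesis
      unfolding w_def[symmetric] Cor_finitary_buchi[OF finitary_buchi_guess_aut w] by simp
  next
    case False
    then have odd: "r \<notin> {0, deadline n + 1 - j, deadline n + 1}"
      unfolding even r_def .
    define d where "d = (if r + j \<le> deadline n then deadline n + 1 - j - r else deadline n + 1 - r)"
    have "r \<le> deadline n + 1" unfolding r_def by (rule mod_period_le)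
    then have d: "0 < d" "d \<le> deadline n - j" "r + d \<in> {deadline n + 1 - j, deadline n + 1}"
      using odd j unfolding d_def deadline_def by auto
    then have "(t + d) mod period n = r + d"
      by (intro mod_add_offset) (auto simp: r_def period_def)
    then have "Cor (guess_aut n) w t \<le> enat d"
      using d even by (intro Cor_le_distance_to_even[OF finitary_buchi_guess_aut w]) auto
    also have "\<dots> \<le> enat (deadline n - j)" using d by simp
    finally show ?thesis unfolding w_def .
  qed
qed

lemma wins_predict:
  assumes "j \<le> n"
  shows "wins n j (predict n j)"
  unfolding winning_def
proof (intro conjI strategy_predict ballI)
  fix alpha :: "nat \<Rightarrow> nat" assume alpha: "alpha \<in> omega_words {0, 1}"
  have "limsup (Cor (guess_aut n) (outcome (fk j) (predict n j) alpha)) \<le> enat (deadline n - j)"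
    using Cor_predict_le[OF assms alpha] by (intro Limsup_bounded) simp
  then have "accepting (guess_aut n) (outcome (fk j) (predict n j) alpha)"
    unfolding accepting_def using enat_ord_simps(4) le_less_trans by blast
  then show "outcome (fk j) (predict n j) alpha \<in> lang (guess_aut n)"
    unfolding lang_def using outcome_in_alph_guess_aut[OF strategy_predict alpha] by simp
qed

lemma strat_cost_predict_le:
  assumes "j \<le> n"
  shows "strat_cost (guess_aut n) (fk j) {0, 1} (predict n j) \<le> enat (deadline n - j)"
  unfolding strat_cost_def
  using Cor_predict_le[OF assms] by (intro SUP_least Limsup_bounded) simp

lemma strat_cost_predict:
  assumes "j \<le> n"
  shows "strat_cost (guess_aut n) (fk j) {0, 1} (predict n j) = enat (deadline n - j)"
  using strat_cost_predict_le[OF assms] strat_cost_lower_bound[OF wins_predict[OF assms]]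
  by (rule antisym)

lemma optimal_predict:
  assumes "j \<le> n"
  shows "optimal (guess_aut n) (fk j) {0, 1} {0, 1, 2} (predict n j)"
  unfolding optimal_def
proof (intro conjI allI impI wins_predict[OF assms])
  fix tau' assume "wins n j tau'"
  then show "strat_cost (guess_aut n) (fk j) {0, 1} (predict n j)
      \<le> strat_cost (guess_aut n) (fk j) {0, 1} tau'"
    unfolding strat_cost_predict[OF assms] by (rule strat_cost_lower_bound)
qed

theorem theorem7:
  "\<exists>c::nat. \<forall>n::nat. n > 0 \<longrightarrow>
     (\<exists>(SI::nat set) (SO::nat set) (A::(nat, nat \<times> nat) pac).
        finite SI \<and> finite SO \<and> SI \<noteq> {} \<and> SO \<noteq> {} \<and>
        alph A = SI \<times> SO \<and> finitary_buchi A \<and> card (states A) \<le> c * n\<^sup>2 \<and>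
        (\<forall>j \<le> n. \<exists>tau. optimal A (fk j) SI SO tau \<and>
             strat_cost A (fk j) SI tau = enat (2 * (n + 1) - j)))"
proof (intro exI[of _ 48] allI impI)
  fix n :: nat assume "0 < n"
  then have "8 * period n \<le> 48 * n\<^sup>2"
    by (cases n) (simp_all add: period_def deadline_def power2_eq_square)
  then have card: "card (states (guess_aut n)) \<le> 48 * n\<^sup>2"
    by (rule le_trans[OF card_states_guess_aut])
  have "deadline n - j = 2 * (n + 1) - j" for j
    by (simp add: deadline_def)
  then have strategies: "\<forall>j \<le> n. \<exists>tau. optimal (guess_aut n) (fk j) {0, 1} {0, 1, 2} tau \<and>
      strat_cost (guess_aut n) (fk j) {0, 1} tau = enat (2 * (n + 1) - j)"
    using optimal_predict strat_cost_predict by metis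
  show "\<exists>(SI::nat set) (SO::nat set) (A::(nat, nat \<times> nat) pac).
      finite SI \<and> finite SO \<and> SI \<noteq> {} \<and> SO \<noteq> {} \<and>
      alph A = SI \<times> SO \<and> finitary_buchi A \<and> card (states A) \<le> 48 * n\<^sup>2 \<and>
      (\<forall>j \<le> n. \<exists>tau. optimal A (fk j) SI SO tau \<and>
         strat_cost A (fk j) SI tau = enat (2 * (n + 1) - j))"
    by (rule exI[of _ "{0, 1}"], rule exI[of _ "{0, 1, 2}"], rule exI[of _ "guess_aut n"])
      (use finitary_buchi_guess_aut card strategies in simp)
qed

end
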